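(* Let $M=((W,\preccurlyeq,S),V)$ be an $\mathrm{ITL}^{\mathrm{BD}_n}$ model and $w\in W$ with $M,w\models\{\Box(\neg p\vee\neg\neg p)\mid p\in\mathbb{P}\}$. Then there exist an $\mathrm{ITL}^{\mathrm{BD}_n}$ model $M'=((W',\preccurlyeq',S'),V')$, a world $w'\in W'$ and an intuitionistic temporal bisimulation $Z\subseteq W\times W'$ such that for all $i\ge0$, $S^i(w)\,Z\,S'^i(w')$ and the subframe generated by $S'^i(w')$ has a unique $\preccurlyeq'$-maximal world $u_i$.
   Context: Fix a countable set $\mathbb{P}$ of atoms. Temporal formulas: $\varphi ::= p\mid\bot\mid\varphi\wedge\varphi\mid\varphi\vee\varphi\mid\varphi\to\varphi\mid\circ\varphi\mid\varphi\,\mathsf{U}\,\varphi\mid\varphi\,\mathsf{R}\,\varphi$; $\neg\varphi:=\varphi\to\bot$, $\Box\varphi:=\bot\,\mathsf{R}\,\varphi$. An intuitionistic temporal frame is $(W,\preccurlyeq,S)$ with $W\ne\emptyset$, $\preccurlyeq$ a partial order, $S:W\to W$ forward confluent ($w\preccurlyeq v\Rightarrow S(w)\preccurlyeq S(v)$); persistent if also backward confluent (if $S(w)=v\preccurlyeq u$ then some $t\succcurlyeq w$ has $S(t)=u$). A model adds $V:W\to2^{\mathbb{P}}$ monotone along $\preccurlyeq$. Satisfaction: atoms via $V$; $\bot$ never; $\wedge,\vee$ pointwise; $M,w\models\varphi\to\psi$ iff for all $v\succcurlyeq w$, $M,v\models\varphi$ implies $M,v\models\psi$; $\circ\varphi$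 at $w$ iff $\varphi$ at $S(w)$; $\varphi\,\mathsf{U}\,\psi$: some $k\ge0$ with $\psi$ at $S^k(w)$ and $\varphi$ at $S^i(w)$ for all $0\le i<k$; $\varphi\,\mathsf{R}\,\psi$: for all $k\ge0$, $\psi$ at $S^k(w)$ or $\varphi$ at some $S^i(w)$, $0\le i<k$. An $\mathrm{ITL}^{\mathrm{BD}_n}$ model is a model on a persistent frame with no chain of $n+1$ pairwise distinct $\preccurlyeq$-related worlds. A world is maximal if no distinct world lies $\preccurlyeq$-above it; the subframe generated by $x$ is $\{y\mid x\preccurlyeq y\}$. An intuitionistic temporal bisimulation between $M_1=((W_1,\preccurlyeq_1,S_1),V_1)$ and $M_2=((W_2,\preccurlyeq_2,S_2),V_2)$ is $Z\subseteq W_1\times W_2$ such that whenever $w_1Zw_2$: (C1) $V_1(w_1)=V_2(w_2)$; (C2) for every $v_1\succcurlyeq w_1$ there is $v_2\succcurlyeq w_2$ with $v_1Zv_2$; (C3) for every $v_2\succcurlyeq w_2$ there is $v_1\succcurlyeq w_1$ with $v_1Zv_2$; (C5) $S_1(w_1)\,Z\,S_2(w_2)$; (C6) for all $k_1\ge0$ there are $k_2\ge0$ and $v_1Zv_2$ with $v_2\preccurlyeq S_2^{k_2}(w_2)$, $S_1^{k_1}(w_1)\preccurlyeq v_1$, and for all $0\le j_2<k_2$ there are $0\le j_1<k_1$ and $u_1Zu_2$ with $S_1^{j_1}(w_1)\preccurlyeq u_1$, $u_2\preccurlyeq S_2^{j_2}(w_2)$; (C7) for all $k_2\ge0$ there are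 $k_1\ge0$ and $v_1Zv_2$ with $v_1\preccurlyeq S_1^{k_1}(w_1)$, $S_2^{k_2}(w_2)\preccurlyeq v_2$, and for all $0\le j_1<k_1$ there are $0\le j_2<k_2$ and $u_1Zu_2$ with $S_2^{j_2}(w_2)\preccurlyeq u_2$, $u_1\preccurlyeq S_1^{j_1}(w_1)$; (C8) for all $k_2\ge0$ there are $k_1\ge0$ and $v_1Zv_2$ with $v_2\preccurlyeq S_2^{k_2}(w_2)$, $S_1^{k_1}(w_1)\preccurlyeq v_1$, and for all $0\le j_1<k_1$ there are $0\le j_2<k_2$ and $u_1Zu_2$ with $S_1^{j_1}(w_1)\preccurlyeq u_1$, $u_2\preccurlyeq S_2^{j_2}(w_2)$; (C9) for all $k_1\ge0$ there are $k_2\ge0$ and $v_1Zv_2$ with $v_1\preccurlyeq S_1^{k_1}(w_1)$, $S_2^{k_2}(w_2)\preccurlyeq v_2$, and for all $0\le j_2<k_2$ there are $0\le j_1<k_1$ and $u_1Zu_2$ with $S_2^{j_2}(w_2)\preccurlyeq u_2$, $u_1\preccurlyeq S_1^{j_1}(w_1)$. *)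

theory Defs
  imports Main "HOL-Library.Countable"
begin

datatype 'p form =
    Atom 'p | Bot | And "'p form" "'p form" | Or "'p form" "'p form"
  | Imp "'p form" "'p form" | Next "'p form"
  | Until "'p form" "'p form" | Release "'p form" "'p form"

definition Neg :: "'p form \<Rightarrow> 'p form" where
  "Neg \<phi> = Imp \<phi> Bot"

definition Box :: "'p form \<Rightarrow> 'p form" where
  "Box \<phi> = Release Bot \<phi>"

fun sat :: "'w set \<Rightarrow> ('w \<Rightarrow> 'w \<Rightarrow> bool) \<Rightarrow> ('w \<Rightarrow> 'w) \<Rightarrow> ('w \<Rightarrow> 'p set)
            \<Rightarrow> 'w \<Rightarrow> 'p form \<Rightarrow> bool" where
  "sat W le S V w (Atom p) = (p \<in> V w)"
| "sat W le S V w Bot = False"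
| "sat W le S V w (And \<phi> \<psi>) = (sat W le S V w \<phi> \<and> sat W le S V w \<psi>)"
| "sat W le S V w (Or \<phi> \<psi>) = (sat W le S V w \<phi> \<or> sat W le S V w \<psi>)"
| "sat W le S V w (Imp \<phi> \<psi>) =
     (\<forall>v\<in>W. le w v \<longrightarrow> sat W le S V v \<phi> \<longrightarrow> sat W le S V v \<psi>)"
| "sat W le S V w (Next \<phi>) = sat W le S V (S w) \<phi>"
| "sat W le S V w (Until \<phi> \<psi>) =
     (\<exists>k. sat W le S V ((S ^^ k) w) \<psi> \<and> (\<forall>i<k. sat W le S V ((S ^^ i) w) \<phi>))"
| "sat W le S V w (Release \<phi> \<psi>) =
     (\<forall>k. sat W le S V ((S ^^ k) w) \<psi> \<or> (\<exists>i<k. sat W le S V ((S ^^ i) w) \<phi>))"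

definition itl_frame :: "'w set \<Rightarrow> ('w \<Rightarrow> 'w \<Rightarrow> bool) \<Rightarrow> ('w \<Rightarrow> 'w) \<Rightarrow> bool" where
  "itl_frame W le S \<longleftrightarrow>
     W \<noteq> {} \<and> (\<forall>w\<in>W. S w \<in> W)
   \<and> (\<forall>w\<in>W. le w w)
   \<and> (\<forall>u\<in>W. \<forall>v\<in>W. le u v \<and> le v u \<longrightarrow> u = v)
   \<and> (\<forall>u\<in>W. \<forall>v\<in>W. \<forall>x\<in>W. le u v \<and> le v x \<longrightarrow> le u x)
   \<and> (\<forall>w\<in>W. \<forall>v\<in>W. le w v \<longrightarrow> le (S w) (S v))"

definition persistent_frame :: "'w set \<Rightarrow> ('w \<Rightarrow> 'w \<Rightarrow> bool) \<Rightarrow> ('w \<Rightarrow> 'w) \<Rightarrow> bool" where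
  "persistent_frame W le S \<longleftrightarrow> itl_frame W le S
   \<and> (\<forall>w\<in>W. \<forall>u\<in>W. le (S w) u \<longrightarrow> (\<exists>t\<in>W. le w t \<and> S t = u))"

definition itl_model :: "'w set \<Rightarrow> ('w \<Rightarrow> 'w \<Rightarrow> bool) \<Rightarrow> ('w \<Rightarrow> 'w) \<Rightarrow> ('w \<Rightarrow> 'p set) \<Rightarrow> bool" where
  "itl_model W le S V \<longleftrightarrow> itl_frame W le S
   \<and> (\<forall>w\<in>W. \<forall>v\<in>W. le w v \<longrightarrow> V w \<subseteq> V v)"

definition bounded_depth :: "nat \<Rightarrow> 'w set \<Rightarrow> ('w \<Rightarrow> 'w \<Rightarrow> bool) \<Rightarrow> bool" where
  "bounded_depth n W le \<longleftrightarrow>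
     \<not> (\<exists>f. (\<forall>i\<le>n. f i \<in> W) \<and> inj_on f {0..n} \<and> (\<forall>i<n. le (f i) (f (Suc i))))"

definition itl_bd_model :: "nat \<Rightarrow> 'w set \<Rightarrow> ('w \<Rightarrow> 'w \<Rightarrow> bool) \<Rightarrow> ('w \<Rightarrow> 'w) \<Rightarrow> ('w \<Rightarrow> 'p set) \<Rightarrow> bool" where
  "itl_bd_model n W le S V \<longleftrightarrow>
     itl_model W le S V \<and> persistent_frame W le S \<and> bounded_depth n W le"

definition maximal_world :: "'w set \<Rightarrow> ('w \<Rightarrow> 'w \<Rightarrow> bool) \<Rightarrow> 'w \<Rightarrow> bool" where
  "maximal_world W le u \<longleftrightarrow> u \<in> W \<and> (\<forall>v\<in>W. le u v \<longrightarrow> v = u)"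

definition generated :: "'w set \<Rightarrow> ('w \<Rightarrow> 'w \<Rightarrow> bool) \<Rightarrow> 'w \<Rightarrow> 'w set" where
  "generated W le x = {y \<in> W. le x y}"

definition unique_max_above :: "'w set \<Rightarrow> ('w \<Rightarrow> 'w \<Rightarrow> bool) \<Rightarrow> 'w \<Rightarrow> bool" where
  "unique_max_above W le x \<longleftrightarrow> (\<exists>!u. maximal_world (generated W le x) le u)"

definition itl_bisim ::
  "'w set \<Rightarrow> ('w \<Rightarrow> 'w \<Rightarrow> bool) \<Rightarrow> ('w \<Rightarrow> 'w) \<Rightarrow> ('w \<Rightarrow> 'p set) \<Rightarrow>
   'v set \<Rightarrow> ('v \<Rightarrow> 'v \<Rightarrow> bool) \<Rightarrow> ('v \<Rightarrow> 'v) \<Rightarrow> ('v \<Rightarrow> 'p set) \<Rightarrow>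
   ('w \<times> 'v) set \<Rightarrow> bool" where
  "itl_bisim W1 le1 S1 V1 W2 le2 S2 V2 Z \<longleftrightarrow> Z \<subseteq> W1 \<times> W2 \<and>
   (\<forall>(w1, w2) \<in> Z.
     \<comment> \<open>C1\<close>
     V1 w1 = V2 w2
     \<comment> \<open>C2\<close>
   \<and> (\<forall>v1\<in>W1. le1 w1 v1 \<longrightarrow> (\<exists>v2\<in>W2. le2 w2 v2 \<and> (v1, v2) \<in> Z))
     \<comment> \<open>C3\<close>
   \<and> (\<forall>v2\<in>W2. le2 w2 v2 \<longrightarrow> (\<exists>v1\<in>W1. le1 w1 v1 \<and> (v1, v2) \<in> Z))
     \<comment> \<open>C5\<close>
   \<and> (S1 w1, S2 w2) \<in> Z
     \<comment> \<open>C6\<close>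
   \<and> (\<forall>k1. \<exists>k2 v1 v2. (v1, v2) \<in> Z \<and> le2 v2 ((S2 ^^ k2) w2) \<and> le1 ((S1 ^^ k1) w1) v1 \<and>
        (\<forall>j2<k2. \<exists>j1<k1. \<exists>u1 u2. (u1, u2) \<in> Z \<and> le1 ((S1 ^^ j1) w1) u1 \<and> le2 u2 ((S2 ^^ j2) w2)))
     \<comment> \<open>C7\<close>
   \<and> (\<forall>k2. \<exists>k1 v1 v2. (v1, v2) \<in> Z \<and> le1 v1 ((S1 ^^ k1) w1) \<and> le2 ((S2 ^^ k2) w2) v2 \<and>
        (\<forall>j1<k1. \<exists>j2<k2. \<exists>u1 u2. (u1, u2) \<in> Z \<and> le2 ((S2 ^^ j2) w2) u2 \<and> le1 u1 ((S1 ^^ j1) w1)))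
     \<comment> \<open>C8\<close>
   \<and> (\<forall>k2. \<exists>k1 v1 v2. (v1, v2) \<in> Z \<and> le2 v2 ((S2 ^^ k2) w2) \<and> le1 ((S1 ^^ k1) w1) v1 \<and>
        (\<forall>j1<k1. \<exists>j2<k2. \<exists>u1 u2. (u1, u2) \<in> Z \<and> le1 ((S1 ^^ j1) w1) u1 \<and> le2 u2 ((S2 ^^ j2) w2)))
     \<comment> \<open>C9\<close>
   \<and> (\<forall>k1. \<exists>k2 v1 v2. (v1, v2) \<in> Z \<and> le1 v1 ((S1 ^^ k1) w1) \<and> le2 ((S2 ^^ k2) w2) v2 \<and>
        (\<forall>j2<k2. \<exists>j1<k1. \<exists>u1 u2. (u1, u2) \<in> Z \<and> le2 ((S2 ^^ j2) w2) u2 \<and> le1 u1 ((S1 ^^ j1) w1))))"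

end

theory Submission
  imports Defs
begin

(* Weak excluded middle along the orbit of w forces all maximal worlds above each S^k w to
   agree on every atom, and by persistence S maps maximal worlds to maximal worlds. So in the
   disjoint union of the subframes generated by the points S^k w, the maximal worlds of each
   summand can be collapsed into one top world. The result is again a persistent model of
   depth at most n (a chain of distinct classes lifts to a chain of worlds); relating each
   world to its class is a bisimulation closed under the successor maps, which makes the
   temporal clauses C6-C9 trivial; and the collapsed top is the unique maximal world above
   every class of its summand. Bounded depth is used once more to guarantee that every world
   lies below a maximal one. *)

lemma itl_frame_S_in: "itl_frame W le S \<Longrightarrow> v \<in> W \<Longrightarrow> S v \<in> W"
  unfolding itl_frame_def by blast

lemma itl_frame_refl: "itl_frame W le S \<Longrightarrow> v \<in> W \<Longrightarrow> le v v"
  unfolding itl_frame_def by blast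

lemma itl_frame_antisym:
  "itl_frame W le S \<Longrightarrow> u \<in> W \<Longrightarrow> v \<in> W \<Longrightarrow> le u v \<Longrightarrow> le v u \<Longrightarrow> u = v"
  unfolding itl_frame_def by blast

lemma itl_frame_trans:
  "itl_frame W le S \<Longrightarrow> u \<in> W \<Longrightarrow> v \<in> W \<Longrightarrow> x \<in> W \<Longrightarrow> le u v \<Longrightarrow> le v x \<Longrightarrow> le u x"
  unfolding itl_frame_def by blast

lemma itl_frame_forward_confluent:
  "itl_frame W le S \<Longrightarrow> u \<in> W \<Longrightarrow> v \<in> W \<Longrightarrow> le u v \<Longrightarrow> le (S u) (S v)"
  unfolding itl_frame_def by blast

lemma persistent_frame_backward_confluent:
  "persistent_frame W le S \<Longrightarrow> u \<in> W \<Longrightarrow> v \<in> W \<Longrightarrow> le (S u) v \<Longrightarrow> \<exists>t\<in>W. le u t \<and> S t = v"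
  unfolding persistent_frame_def by blast

lemma itl_model_mono: "itl_model W le S V \<Longrightarrow> u \<in> W \<Longrightarrow> v \<in> W \<Longrightarrow> le u v \<Longrightarrow> V u \<subseteq> V v"
  unfolding itl_model_def by blast

lemma itl_frame_funpow_in: "itl_frame W le S \<Longrightarrow> w \<in> W \<Longrightarrow> (S ^^ k) w \<in> W"
  by (induction k) (auto simp: itl_frame_S_in)

lemma maximal_world_S:
  assumes "persistent_frame W le S" and "maximal_world W le m"
  shows "maximal_world W le (S m)"
proof -
  have frame: "itl_frame W le S" and m: "m \<in> W"
    using assms unfolding persistent_frame_def maximal_world_def by auto
  have "u = S m" if "u \<in> W" "le (S m) u" for u
    using persistent_frame_backward_confluent[OF assms(1) m that] assms(2)
    unfolding maximal_world_def by blast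
  then show ?thesis
    using itl_frame_S_in[OF frame m] unfolding maximal_world_def by blast
qed

lemma sat_Box: "sat W le S V w (Box \<phi>) \<longleftrightarrow> (\<forall>k. sat W le S V ((S ^^ k) w) \<phi>)"
  by (simp add: Box_def)

lemma sat_wem_maximal_agree:
  assumes "sat W le S V v (Or (Neg (Atom p)) (Neg (Neg (Atom p))))"
    and "maximal_world W le m1" "maximal_world W le m2" "le v m1" "le v m2"
  shows "p \<in> V m1 \<longleftrightarrow> p \<in> V m2"
  using assms unfolding Neg_def maximal_world_def by auto

lemma bounded_depth_pos: "bounded_depth n W le \<Longrightarrow> w \<in> W \<Longrightarrow> 0 < n"
  unfolding bounded_depth_def by (cases n) (auto intro!: exI[of _ "\<lambda>_. w"])

lemma strict_chain_inj:
  assumes in_W: "\<And>i. f i \<in> W"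
    and step: "\<And>i. le (f i) (f (Suc i))" "\<And>i. f (Suc i) \<noteq> f i"
    and refl: "\<And>v. v \<in> W \<Longrightarrow> le v v"
    and antisym: "\<And>u v. u \<in> W \<Longrightarrow> v \<in> W \<Longrightarrow> le u v \<Longrightarrow> le v u \<Longrightarrow> u = v"
    and trans: "\<And>u v x. u \<in> W \<Longrightarrow> v \<in> W \<Longrightarrow> x \<in> W \<Longrightarrow> le u v \<Longrightarrow> le v x \<Longrightarrow> le u x"
  shows "inj f"
proof -
  have ascending: "le (f i) (f (i + d))" for i d
  proof (induction d)
    case (Suc d)
    then show ?case using trans[OF in_W in_W in_W _ step(1)] by simp
  qed (simp add: refl in_W)
  have "f i \<noteq> f j" if "i < j" for i j
  proof
    assume "f i = f j"
    moreover obtain d where "j = Suc i + d" using \<open>i < j\<close> less_imp_Suc_add by blast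
    ultimately have "le (f (Suc i)) (f i)" using ascending[of "Suc i" d] by simp
    then show False using antisym step in_W by blast
  qed
  then show ?thesis by (metis injI linorder_neqE_nat)
qed

lemma bounded_depth_ex_maximal:
  assumes depth: "bounded_depth n W le" and "x \<in> W"
    and refl: "\<And>v. v \<in> W \<Longrightarrow> le v v"
    and antisym: "\<And>u v. u \<in> W \<Longrightarrow> v \<in> W \<Longrightarrow> le u v \<Longrightarrow> le v u \<Longrightarrow> u = v"
    and trans: "\<And>u v x. u \<in> W \<Longrightarrow> v \<in> W \<Longrightarrow> x \<in> W \<Longrightarrow> le u v \<Longrightarrow> le v x \<Longrightarrow> le u x"
  shows "\<exists>m. maximal_world W le m \<and> le x m"
proof -
  text \<open>A maximal world above \<open>x\<close> is a minimal element of \<open>{v \<in> W. le x v}\<close> for the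
    strict converse order, which is well founded because bounded depth excludes infinite
    strictly ascending chains.\<close>
  define above where "above = {(v, u). u \<in> W \<and> v \<in> W \<and> le u v \<and> v \<noteq> u}"
  have "wf above"
    unfolding wf_iff_no_infinite_down_chain
  proof
    assume "\<exists>f. \<forall>i. (f (Suc i), f i) \<in> above"
    then obtain f where f: "\<And>i. (f (Suc i), f i) \<in> above" by blast
    have f_in: "f i \<in> W" and f_step: "le (f i) (f (Suc i))" "f (Suc i) \<noteq> f i" for i
      using f[of i] unfolding above_def by auto
    have "inj f"
      by (rule strict_chain_inj[of f W le]) (use f_in f_step refl antisym trans in blast)+
    with f_in f_step show False
      using depth unfolding bounded_depth_def by (meson inj_on_subset subset_UNIV)
  qed
  then obtain m where m: "m \<in> {v \<in> W. le x v}" and top: "\<And>v. (v, m) \<in> above \<Longrightarrow> v \<notin> {v \<in> W. le x v}"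
    using wfE_min[OF \<open>wf above\<close>, of x "{v \<in> W. le x v}"] \<open>x \<in> W\<close> refl by blast
  have "v = m" if "v \<in> W" "le m v" for v
  proof (rule ccontr)
    assume "v \<noteq> m"
    then have "(v, m) \<in> above" using that m unfolding above_def by auto
    moreover have "le x v" using trans[of x m v] m that \<open>x \<in> W\<close> by blast
    ultimately show False using top that by blast
  qed
  with m show ?thesis unfolding maximal_world_def by blast
qed

lemma unique_max_aboveI:
  assumes "g \<in> generated W le x" and "\<And>v. v \<in> generated W le x \<Longrightarrow> le v g"
    and antisym: "\<And>u v. u \<in> W \<Longrightarrow> v \<in> W \<Longrightarrow> le u v \<Longrightarrow> le v u \<Longrightarrow> u = v"
  shows "unique_max_above W le x"
proof -
  have "maximal_world (generated W le x) le g"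
    using assms unfolding maximal_world_def generated_def by blast
  moreover have "u = g" if "maximal_world (generated W le x) le u" for u
    using that assms unfolding maximal_world_def by blast
  ultimately show ?thesis unfolding unique_max_above_def by blast
qed

text \<open>When the relation is closed under the successor maps, clauses C6--C9 hold with
  \<open>k\<^sub>2 = k\<^sub>1\<close> (resp. \<open>k\<^sub>1 = k\<^sub>2\<close>), witnessed along the two orbits.\<close>
lemma itl_bisimI:
  assumes frames: "itl_frame W1 le1 S1" "itl_frame W2 le2 S2"
    and Z_sub: "Z \<subseteq> W1 \<times> W2"
    and val: "\<And>a b. (a, b) \<in> Z \<Longrightarrow> V1 a = V2 b"
    and zig: "\<And>a b a'. (a, b) \<in> Z \<Longrightarrow> a' \<in> W1 \<Longrightarrow> le1 a a' \<Longrightarrow> \<exists>b'\<in>W2. le2 b b' \<and> (a', b') \<in> Z"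
    and zag: "\<And>a b b'. (a, b) \<in> Z \<Longrightarrow> b' \<in> W2 \<Longrightarrow> le2 b b' \<Longrightarrow> \<exists>a'\<in>W1. le1 a a' \<and> (a', b') \<in> Z"
    and succ: "\<And>a b. (a, b) \<in> Z \<Longrightarrow> (S1 a, S2 b) \<in> Z"
  shows "itl_bisim W1 le1 S1 V1 W2 le2 S2 V2 Z"
proof -
  have orbit: "((S1 ^^ j) a, (S2 ^^ j) b) \<in> Z" if "(a, b) \<in> Z" for a b j
    by (induction j) (simp_all add: that succ)
  have refl: "le1 ((S1 ^^ j) a) ((S1 ^^ j) a)" "le2 ((S2 ^^ j) b) ((S2 ^^ j) b)"
    if "(a, b) \<in> Z" for a b j
    using orbit[OF that, of j] Z_sub itl_frame_refl[OF frames(1)] itl_frame_refl[OF frames(2)]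
    by blast+
  show ?thesis
    unfolding itl_bisim_def
  proof (intro conjI Z_sub ballI, clarify, intro conjI allI)
    fix a b k assume ab: "(a, b) \<in> Z"
    note along = orbit[OF ab] refl[OF ab]
    show "V1 a = V2 b" using val[OF ab] .
    show "\<forall>a'\<in>W1. le1 a a' \<longrightarrow> (\<exists>b'\<in>W2. le2 b b' \<and> (a', b') \<in> Z)" using zig[OF ab] by blast
    show "\<forall>b'\<in>W2. le2 b b' \<longrightarrow> (\<exists>a'\<in>W1. le1 a a' \<and> (a', b') \<in> Z)" using zag[OF ab] by blast
    show "(S1 a, S2 b) \<in> Z" using succ[OF ab] .
    show "\<exists>k2 v1 v2. (v1, v2) \<in> Z \<and> le2 v2 ((S2 ^^ k2) b) \<and> le1 ((S1 ^^ k) a) v1 \<and>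
        (\<forall>j2<k2. \<exists>j1<k. \<exists>u1 u2. (u1, u2) \<in> Z \<and> le1 ((S1 ^^ j1) a) u1 \<and> le2 u2 ((S2 ^^ j2) b))"
      using along by blast
    show "\<exists>k1 v1 v2. (v1, v2) \<in> Z \<and> le1 v1 ((S1 ^^ k1) a) \<and> le2 ((S2 ^^ k) b) v2 \<and>
        (\<forall>j1<k1. \<exists>j2<k. \<exists>u1 u2. (u1, u2) \<in> Z \<and> le2 ((S2 ^^ j2) b) u2 \<and> le1 u1 ((S1 ^^ j1) a))"
      using along by blast
    show "\<exists>k1 v1 v2. (v1, v2) \<in> Z \<and> le2 v2 ((S2 ^^ k) b) \<and> le1 ((S1 ^^ k1) a) v1 \<and>
        (\<forall>j1<k1. \<exists>j2<k. \<exists>u1 u2. (u1, u2) \<in> Z \<and> le1 ((S1 ^^ j1) a) u1 \<and> le2 u2 ((S2 ^^ j2) b))"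
      using along by blast
    show "\<exists>k2 v1 v2. (v1, v2) \<in> Z \<and> le1 v1 ((S1 ^^ k) a) \<and> le2 ((S2 ^^ k2) b) v2 \<and>
        (\<forall>j2<k2. \<exists>j1<k. \<exists>u1 u2. (u1, u2) \<in> Z \<and> le2 ((S2 ^^ j2) b) u2 \<and> le1 u1 ((S1 ^^ j1) a))"
      using along by blast
  qed
qed

locale maximal_collapse =
  fixes W :: "'w set" and le :: "'w \<Rightarrow> 'w \<Rightarrow> bool" and S :: "'w \<Rightarrow> 'w"
    and V :: "'w \<Rightarrow> 'p set" and w :: 'w
  assumes model: "itl_model W le S V"
    and persistent: "persistent_frame W le S"
    and w_in: "w \<in> W"
    and ex_maximal_above: "\<And>x. x \<in> W \<Longrightarrow> \<exists>m. maximal_world W le m \<and> le x m"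
    and maximal_agree: "\<And>k m m'. maximal_world W le m \<Longrightarrow> maximal_world W le m' \<Longrightarrow>
      le ((S ^^ k) w) m \<Longrightarrow> le ((S ^^ k) w) m' \<Longrightarrow> V m = V m'"
begin

abbreviation maximal :: "'w \<Rightarrow> bool" where
  "maximal \<equiv> maximal_world W le"

lemma frame: "itl_frame W le S"
  using model unfolding itl_model_def by blast

lemmas S_in_W = itl_frame_S_in[OF frame]
  and refl_W = itl_frame_refl[OF frame]
  and antisym_W = itl_frame_antisym[OF frame]
  and trans_W = itl_frame_trans[OF frame]
  and forward_confluent = itl_frame_forward_confluent[OF frame]
  and backward_confluent = persistent_frame_backward_confluent[OF persistent]
  and orbit_in_W = itl_frame_funpow_in[OF frame w_in]

lemma maximal_in: "maximal m \<Longrightarrow> m \<in> W"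
  unfolding maximal_world_def by blast

lemma maximalD: "maximal m \<Longrightarrow> u \<in> W \<Longrightarrow> le m u \<Longrightarrow> u = m"
  unfolding maximal_world_def by blast

text \<open>A world \<open>v\<close> above \<open>S\<^sup>k w\<close> is tagged as \<open>(v, k)\<close>, which makes the generated
  subframes disjoint; worlds of the new model are the classes obtained by identifying the
  maximal worlds of each level.\<close>

definition cone :: "('w \<times> nat) set" where
  "cone = {(v, k). v \<in> W \<and> le ((S ^^ k) w) v}"

definition top_class :: "nat \<Rightarrow> ('w \<times> nat) set" where
  "top_class k = {(m, k) | m. maximal m \<and> le ((S ^^ k) w) m}"

definition cls :: "'w \<times> nat \<Rightarrow> ('w \<times> nat) set" where
  "cls x = (if maximal (fst x) then top_class (snd x) else {x})"

definition W' :: "('w \<times> nat) set set" where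
  "W' = cls ` cone"

definition le' :: "('w \<times> nat) set \<Rightarrow> ('w \<times> nat) set \<Rightarrow> bool" where
  "le' A B \<longleftrightarrow> (\<exists>x\<in>A. \<exists>y\<in>B. snd x = snd y \<and> le (fst x) (fst y))"

text \<open>Independent of the chosen representative, since \<open>S\<close> maps maximal worlds to maximal
  worlds (lemma \<open>S'_cls\<close>).\<close>
definition S' :: "('w \<times> nat) set \<Rightarrow> ('w \<times> nat) set" where
  "S' A = cls (map_prod S Suc (SOME x. x \<in> A))"

definition V' :: "('w \<times> nat) set \<Rightarrow> 'p set" where
  "V' A = (\<Union>x\<in>A. V (fst x))"

definition Z :: "('w \<times> ('w \<times> nat) set) set" where
  "Z = {(v, cls (v, k)) | v k. (v, k) \<in> cone}"

lemma cone_iff: "(v, k) \<in> cone \<longleftrightarrow> v \<in> W \<and> le ((S ^^ k) w) v"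
  unfolding cone_def by simp

lemma cone_D: "x \<in> cone \<Longrightarrow> fst x \<in> W \<and> le ((S ^^ snd x) w) (fst x)"
  unfolding cone_def by auto

lemma cone_up: "(v, k) \<in> cone \<Longrightarrow> u \<in> W \<Longrightarrow> le v u \<Longrightarrow> (u, k) \<in> cone"
  unfolding cone_iff using trans_W orbit_in_W by blast

lemma orbit_cone: "((S ^^ k) w, k) \<in> cone"
  unfolding cone_iff using orbit_in_W refl_W by blast

lemma map_prod_cone: "x \<in> cone \<Longrightarrow> map_prod S Suc x \<in> cone"
  unfolding cone_def using S_in_W forward_confluent orbit_in_W by auto

lemma in_cls: "x \<in> cone \<Longrightarrow> x \<in> cls x"
  unfolding cls_def top_class_def cone_def by auto

lemma cls_in_W': "x \<in> cone \<Longrightarrow> cls x \<in> W'"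
  unfolding W'_def by blast

lemma W'_memberE:
  assumes "A \<in> W'"
  obtains x where "x \<in> cone" "A = cls x"
  using assms unfolding W'_def by blast

lemma cls_maximal: "maximal m \<Longrightarrow> cls (m, k) = top_class k"
  unfolding cls_def by simp

lemma W'_member:
  assumes "A \<in> W'" and "x \<in> A"
  shows "x \<in> cone" and "A = cls x"
proof -
  obtain y where y: "y \<in> cone" "A = cls y" using assms(1) unfolding W'_def by blast
  have "x \<in> cone \<and> A = cls x"
  proof (cases "maximal (fst y)")
    case True
    with y assms(2) obtain m where "x = (m, snd y)" "maximal m" "le ((S ^^ snd y) w) m"
      unfolding cls_def top_class_def by auto
    with y True show ?thesis using maximal_in by (auto simp: cls_def cone_iff)
  next
    case False
    with y assms(2) show ?thesis unfolding cls_def by simp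
  qed
  then show "x \<in> cone" and "A = cls x" by blast+
qed

lemma le'_cls: "x \<in> cone \<Longrightarrow> y \<in> cone \<Longrightarrow> snd x = snd y \<Longrightarrow> le (fst x) (fst y) \<Longrightarrow> le' (cls x) (cls y)"
  unfolding le'_def using in_cls by blast

lemma le'_members:
  assumes "A \<in> W'" "B \<in> W'" "le' A B"
  obtains a b where "a \<in> cone" "b \<in> cone" "A = cls a" "B = cls b" "snd a = snd b" "le (fst a) (fst b)"
proof -
  from assms(3) obtain a b where "a \<in> A" "b \<in> B" "snd a = snd b" "le (fst a) (fst b)"
    unfolding le'_def by blast
  then show thesis using that W'_member assms(1,2) by blast
qed

lemma top_class_is_top:
  assumes "A \<in> W'" "a \<in> A" "maximal (fst a)" "B \<in> W'" "le' A B"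
  shows "B = A"
proof -
  obtain a' b where ab: "a' \<in> A" "b \<in> B" "snd a' = snd b" "le (fst a') (fst b)"
    using assms(5) unfolding le'_def by blast
  have A: "A = top_class (snd a)"
    using W'_member[OF assms(1,2)] assms(3) unfolding cls_def by simp
  with ab(1) have a': "maximal (fst a')" "snd a' = snd a" unfolding top_class_def by auto
  have b: "b \<in> cone" "B = cls b" using W'_member[OF assms(4) ab(2)] by blast+
  then have "fst b \<in> W" using cone_D by blast
  then have "fst b = fst a'" using maximalD[OF a'(1) _ ab(4)] by blast
  then have "cls b = top_class (snd a)" using a' ab(3) unfolding cls_def by simp
  then show ?thesis using A b(2) by simp
qed

lemma le'_clsE:
  assumes "x \<in> cone" "B \<in> W'" "le' (cls x) B"
  obtains u where "(u, snd x) \<in> cone" "le (fst x) u" "B = cls (u, snd x)"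
proof (cases "maximal (fst x)")
  case True
  then have "B = cls x"
    using top_class_is_top[OF cls_in_W'[OF assms(1)] in_cls[OF assms(1)] _ assms(2,3)] by blast
  moreover obtain v k where x: "x = (v, k)" by fastforce
  moreover have "le v v" using assms(1) refl_W x by (simp add: cone_iff)
  ultimately show ?thesis using that[of v] assms(1) by simp
next
  case False
  obtain b where b: "b \<in> B" "snd x = snd b" "le (fst x) (fst b)"
    using assms(3) False unfolding le'_def cls_def by auto
  then show ?thesis using that[of "fst b"] W'_member[OF assms(2) b(1)] by simp
qed

lemma W'_cases:
  assumes "A \<in> W'"
  obtains (top) a where "a \<in> A" "maximal (fst a)"
    | (single) x where "x \<in> cone" "\<not> maximal (fst x)" "A = {x}"
proof -
  obtain y where y: "y \<in> cone" "A = cls y" using assms unfolding W'_def by blast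
  show thesis
  proof (cases "maximal (fst y)")
    case True
    then show thesis using top in_cls y by blast
  next
    case False
    then show thesis using single y unfolding cls_def by simp
  qed
qed

lemma S'_cls:
  assumes "x \<in> cone"
  shows "S' (cls x) = cls (map_prod S Suc x)"
proof -
  define y where "y = (SOME y. y \<in> cls x)"
  have y: "y \<in> cls x" unfolding y_def using in_cls[OF assms] by (rule someI)
  have "cls (map_prod S Suc y) = cls (map_prod S Suc x)"
  proof (cases "maximal (fst x)")
    case True
    with y have "maximal (fst y)" "snd y = snd x" unfolding cls_def top_class_def by auto
    with True show ?thesis
      using maximal_world_S[OF persistent] unfolding cls_def by (simp add: map_prod_def split_beta)
  next
    case False
    with y show ?thesis unfolding cls_def by simp
  qed
  then show ?thesis unfolding S'_def y_def by simp
qed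

lemma V'_cls:
  assumes "x \<in> cone"
  shows "V' (cls x) = V (fst x)"
proof (cases "maximal (fst x)")
  case True
  have x_above: "le ((S ^^ snd x) w) (fst x)" using cone_D[OF assms] by blast
  have "V (fst y) = V (fst x)" if "y \<in> top_class (snd x)" for y
  proof -
    from that have "maximal (fst y)" "le ((S ^^ snd x) w) (fst y)" unfolding top_class_def by auto
    then show ?thesis using maximal_agree[OF _ True _ x_above] by blast
  qed
  moreover have "x \<in> top_class (snd x)" using in_cls[OF assms] True unfolding cls_def by simp
  ultimately have "V' (top_class (snd x)) = V (fst x)" unfolding V'_def by (intro SUP_eq_const) blast+
  then show ?thesis using True unfolding cls_def by simp
next
  case False
  then show ?thesis unfolding cls_def V'_def by simp
qed

lemma le'_antisym:
  assumes "A \<in> W'" "B \<in> W'" "le' A B" "le' B A"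
  shows "A = B"
  using assms(1)
proof (cases rule: W'_cases)
  case (top a)
  then show ?thesis using top_class_is_top[OF assms(1) _ _ assms(2,3)] by blast
next
  case A: (single x)
  from assms(2) show ?thesis
  proof (cases rule: W'_cases)
    case (top b)
    then show ?thesis using top_class_is_top[OF assms(2) _ _ assms(1,4)] by blast
  next
    case B: (single y)
    then have "snd x = snd y" "le (fst x) (fst y)" "le (fst y) (fst x)"
      using assms(3,4) A unfolding le'_def by auto
    then show ?thesis using antisym_W cone_D A B by (simp add: prod_eq_iff)
  qed
qed

lemma le'_trans:
  assumes "A \<in> W'" "B \<in> W'" "C \<in> W'" "le' A B" "le' B C"
  shows "le' A C"
  using assms(2)
proof (cases rule: W'_cases)
  case (top b)
  then show ?thesis using top_class_is_top[OF assms(2) _ _ assms(3,5)] assms(4) by blast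
next
  case (single y)
  obtain a c where ac: "a \<in> A" "c \<in> C" "snd a = snd y" "snd y = snd c"
    "le (fst a) (fst y)" "le (fst y) (fst c)"
    using assms(4,5) single(3) unfolding le'_def by auto
  moreover have "fst a \<in> W" "fst c \<in> W"
    using ac(1,2) W'_member(1) assms(1,3) cone_D by blast+
  ultimately have "le (fst a) (fst c)"
    using trans_W cone_D[OF single(1)] by blast
  then show ?thesis using ac unfolding le'_def by auto
qed

lemma S'_mono:
  assumes "A \<in> W'" "B \<in> W'" "le' A B"
  shows "le' (S' A) (S' B)"
proof -
  obtain a b where ab: "a \<in> cone" "b \<in> cone" "A = cls a" "B = cls b"
    "snd a = snd b" "le (fst a) (fst b)"
    using assms by (rule le'_members)
  then have "le (S (fst a)) (S (fst b))" using forward_confluent cone_D by blast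
  then show ?thesis
    using le'_cls[OF map_prod_cone[OF ab(1)] map_prod_cone[OF ab(2)]] ab S'_cls
    by (simp add: map_prod_def split_beta)
qed

lemma frame': "itl_frame W' le' S'"
  unfolding itl_frame_def
proof (intro conjI ballI impI)
  show "W' \<noteq> {}" using cls_in_W'[OF orbit_cone[of 0]] by blast
next
  fix A assume "A \<in> W'"
  then obtain x where x: "x \<in> cone" "A = cls x" by (rule W'_memberE)
  then show "S' A \<in> W'" using S'_cls cls_in_W' map_prod_cone by simp
  show "le' A A" using le'_cls[OF x(1) x(1)] refl_W cone_D x by simp
next
  fix A B assume "A \<in> W'" "B \<in> W'"
  then show "le' A B \<and> le' B A \<Longrightarrow> A = B" and "le' A B \<Longrightarrow> le' (S' A) (S' B)"
    using le'_antisym S'_mono by blast+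
  fix C assume "C \<in> W'"
  then show "le' A B \<and> le' B C \<Longrightarrow> le' A C"
    using le'_trans \<open>A \<in> W'\<close> \<open>B \<in> W'\<close> by blast
qed

lemma model': "itl_model W' le' S' V'"
  unfolding itl_model_def
proof (intro conjI frame' ballI impI)
  fix A B assume "A \<in> W'" "B \<in> W'" "le' A B"
  then obtain a b where ab: "a \<in> cone" "b \<in> cone" "A = cls a" "B = cls b"
    "snd a = snd b" "le (fst a) (fst b)"
    by (rule le'_members)
  moreover have "fst a \<in> W" "fst b \<in> W" using ab(1,2) cone_D by blast+
  ultimately have "V (fst a) \<subseteq> V (fst b)" using itl_model_mono[OF model] by blast
  then show "V' A \<subseteq> V' B" using ab V'_cls by simp
qed

lemma persistent': "persistent_frame W' le' S'"
  unfolding persistent_frame_def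
proof (intro conjI frame' ballI impI)
  fix A B assume AB: "A \<in> W'" "B \<in> W'" "le' (S' A) B"
  obtain v k where x: "(v, k) \<in> cone" "A = cls (v, k)" using AB(1) by (metis W'_memberE surj_pair)
  then have "le' (cls (S v, Suc k)) B" using AB(3) S'_cls by simp
  then obtain u where u: "(u, Suc k) \<in> cone" "le (S v) u" "B = cls (u, Suc k)"
    using le'_clsE[OF map_prod_cone[OF x(1)] AB(2)] by auto
  obtain t where t: "t \<in> W" "le v t" "S t = u"
    using backward_confluent u x(1) unfolding cone_iff by blast
  have tk: "(t, k) \<in> cone" using cone_up x(1) t by blast
  have "le' A (cls (t, k))" using le'_cls[OF x(1) tk] t x by simp
  moreover have "S' (cls (t, k)) = B" using S'_cls[OF tk] t u by simp
  ultimately show "\<exists>T\<in>W'. le' A T \<and> S' T = B" using cls_in_W'[OF tk] by blast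
qed

lemma Z_succ: "(a, b) \<in> Z \<Longrightarrow> (S a, S' b) \<in> Z"
  unfolding Z_def using S'_cls map_prod_cone by fastforce

lemma bisim: "itl_bisim W le S V W' le' S' V' Z"
proof (rule itl_bisimI[OF frame frame'])
  show "Z \<subseteq> W \<times> W'" unfolding Z_def cone_def using cls_in_W' cone_def by auto
  show "V a = V' b" if "(a, b) \<in> Z" for a b using that V'_cls unfolding Z_def by auto
  show "\<exists>b'\<in>W'. le' b b' \<and> (a', b') \<in> Z" if ab: "(a, b) \<in> Z" and a': "a' \<in> W" "le a a'" for a b a'
  proof -
    obtain k where k: "(a, k) \<in> cone" "b = cls (a, k)" using ab unfolding Z_def by blast
    then have "(a', k) \<in> cone" using cone_up a' by blast
    then show ?thesis using le'_cls[OF k(1)] cls_in_W' k a' unfolding Z_def by fastforce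
  qed
  show "\<exists>a'\<in>W. le a a' \<and> (a', b') \<in> Z" if ab: "(a, b) \<in> Z" and b': "b' \<in> W'" "le' b b'" for a b b'
  proof -
    obtain k where k: "(a, k) \<in> cone" "b = cls (a, k)" using ab unfolding Z_def by blast
    then obtain u where "(u, k) \<in> cone" "le a u" "b' = cls (u, k)"
      using le'_clsE[OF k(1)] b' by auto
    then show ?thesis unfolding Z_def cone_iff by blast
  qed
  show "(S a, S' b) \<in> Z" if "(a, b) \<in> Z" for a b using Z_succ[OF that] .
qed

lemma S'_orbit: "(S' ^^ i) (cls (w, 0)) = cls ((S ^^ i) w, i)"
  by (induction i) (simp_all add: S'_cls orbit_cone)

lemma top_class_greatest:
  assumes "x \<in> cone"
  shows "top_class (snd x) \<in> generated W' le' (cls x)"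
    and "\<And>B. B \<in> generated W' le' (cls x) \<Longrightarrow> le' B (top_class (snd x))"
proof -
  have top_above: "le' (cls y) (top_class (snd x)) \<and> top_class (snd x) \<in> W'"
    if y: "y \<in> cone" "snd y = snd x" for y
  proof -
    have "fst y \<in> W" using cone_D[OF y(1)] by blast
    then obtain m where m: "maximal m" "le (fst y) m" using ex_maximal_above by blast
    have "(fst y, snd x) \<in> cone" using y by (metis prod.collapse)
    then have m_cone: "(m, snd x) \<in> cone" using cone_up m maximal_in by blast
    show ?thesis
      using le'_cls[OF y(1) m_cone] cls_in_W'[OF m_cone] m y cls_maximal by simp
  qed
  show "top_class (snd x) \<in> generated W' le' (cls x)"
    using top_above[OF assms refl] unfolding generated_def by blast
  show "le' B (top_class (snd x))" if B: "B \<in> generated W' le' (cls x)" for B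
  proof -
    obtain u where "(u, snd x) \<in> cone" "B = cls (u, snd x)"
      using B le'_clsE[OF assms] unfolding generated_def by blast
    then show ?thesis using top_above by fastforce
  qed
qed

lemma unique_max_above_cls: "x \<in> cone \<Longrightarrow> unique_max_above W' le' (cls x)"
  by (rule unique_max_aboveI[OF top_class_greatest le'_antisym])

lemma le'_strict_singleton:
  assumes "A \<in> W'" "B \<in> W'" "le' A B" "A \<noteq> B"
  shows "\<exists>x. A = {x}"
  using assms(1)
proof (cases rule: W'_cases)
  case (top a)
  then show ?thesis using top_class_is_top[OF assms(1) _ _ assms(2,3)] assms(4) by blast
qed blast

text \<open>Along a chain of distinct classes all but the last are singletons, so the chain
  comes from a chain of tagged worlds of a single level.\<close>
lemma W'_chain_lift:
  assumes n: "n = Suc m"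
    and f: "\<And>i. i \<le> n \<Longrightarrow> f i \<in> W'" "inj_on f {0..n}" "\<And>i. i < n \<Longrightarrow> le' (f i) (f (Suc i))"
  shows "\<exists>g. (\<forall>i\<le>n. g i \<in> cone \<and> f i = cls (g i)) \<and>
    (\<forall>i<n. snd (g i) = snd (g (Suc i)) \<and> le (fst (g i)) (fst (g (Suc i))))"
proof -
  define x where "x i = the_elem (f i)" for i
  have single: "f i = {x i}" if i: "i < n" for i
  proof -
    have "f i \<noteq> f (Suc i)" using inj_onD[OF f(2), of i "Suc i"] i by auto
    then obtain a where "f i = {a}" using le'_strict_singleton f(1,3) i by (meson Suc_leI less_imp_le)
    then show ?thesis unfolding x_def by simp
  qed
  obtain y where y: "y \<in> f n" "snd (x m) = snd y" "le (fst (x m)) (fst y)"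
    using f(3)[of m] single[of m] n unfolding le'_def by auto
  define g where "g i = (if i < n then x i else y)" for i
  have "g i \<in> f i" if "i \<le> n" for i
    using single[of i] y(1) that unfolding g_def by (cases "i < n") auto
  then have "g i \<in> cone \<and> f i = cls (g i)" if "i \<le> n" for i
    using W'_member f(1)[OF that] that by blast
  moreover have "snd (g i) = snd (g (Suc i)) \<and> le (fst (g i)) (fst (g (Suc i)))" if "i < n" for i
  proof (cases "Suc i < n")
    case True
    then show ?thesis
      using f(3)[OF that] single[OF that] single[OF True] that unfolding le'_def g_def by auto
  next
    case False
    then have "i = m" using that n by simp
    then show ?thesis using y n unfolding g_def by simp
  qed
  ultimately show ?thesis by blast
qed

lemma bounded_depth_W':
  assumes depth: "bounded_depth n W le"
  shows "bounded_depth n W' le'"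
  unfolding bounded_depth_def
proof
  assume "\<exists>f. (\<forall>i\<le>n. f i \<in> W') \<and> inj_on f {0..n} \<and> (\<forall>i<n. le' (f i) (f (Suc i)))"
  then obtain f where f: "\<And>i. i \<le> n \<Longrightarrow> f i \<in> W'" "inj_on f {0..n}"
    "\<And>i. i < n \<Longrightarrow> le' (f i) (f (Suc i))" by blast
  obtain m where n: "n = Suc m" using bounded_depth_pos[OF depth w_in] gr0_conv_Suc by blast
  obtain g where g: "\<And>i. i \<le> n \<Longrightarrow> g i \<in> cone \<and> f i = cls (g i)"
    and step: "\<And>i. i < n \<Longrightarrow> snd (g i) = snd (g (Suc i)) \<and> le (fst (g i)) (fst (g (Suc i)))"
    using W'_chain_lift[OF n f] by blast
  have level: "snd (g i) = snd (g 0)" if "i \<le> n" for i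
    using that
  proof (induction i)
    case (Suc i)
    then show ?case using step[of i] by simp
  qed simp
  have "inj_on (\<lambda>i. fst (g i)) {0..n}"
  proof (rule inj_onI)
    fix i j assume ij: "i \<in> {0..n}" "j \<in> {0..n}" "fst (g i) = fst (g j)"
    moreover have "snd (g i) = snd (g j)" using level[of i] level[of j] ij by simp
    ultimately have "g i = g j" by (simp add: prod_eq_iff)
    then have "f i = f j" using g ij by auto
    then show "i = j" using inj_onD[OF f(2)] ij by blast
  qed
  moreover have "\<forall>i\<le>n. fst (g i) \<in> W" using g cone_D by blast
  moreover have "\<forall>i<n. le (fst (g i)) (fst (g (Suc i)))" using step by blast
  ultimately show False
    using depth unfolding bounded_depth_def by (blast intro: exI[of _ "\<lambda>i. fst (g i)"])
qed

end

theorem lemma4p13: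
  fixes n :: nat
    and W :: "'w set" and le :: "'w \<Rightarrow> 'w \<Rightarrow> bool" and S :: "'w \<Rightarrow> 'w"
    and V :: "'w \<Rightarrow> ('p::countable) set" and w :: 'w
  assumes "itl_bd_model n W le S V"
    and "w \<in> W"
    and "\<forall>p. sat W le S V w (Box (Or (Neg (Atom p)) (Neg (Neg (Atom p)))))"
  shows "\<exists>(W' :: ('w \<times> nat) set set) le' S' V' w'.
           itl_bd_model n W' le' S' V' \<and> w' \<in> W' \<and>
           (\<exists>Z. itl_bisim W le S V W' le' S' V' Z \<and>
              (\<forall>i. ((S ^^ i) w, (S' ^^ i) w') \<in> Z \<and> unique_max_above W' le' ((S' ^^ i) w')))"
proof -
  have model: "itl_model W le S V" and persistent: "persistent_frame W le S"
    and depth: "bounded_depth n W le"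
    using assms(1) unfolding itl_bd_model_def by blast+
  have frame: "itl_frame W le S" using model unfolding itl_model_def by blast
  have wem: "sat W le S V ((S ^^ k) w) (Or (Neg (Atom p)) (Neg (Neg (Atom p))))" for k p
    using assms(3)[rule_format, of p] unfolding sat_Box by blast
  interpret maximal_collapse W le S V w
  proof
    show "\<exists>m. maximal_world W le m \<and> le x m" if "x \<in> W" for x
      by (rule bounded_depth_ex_maximal[OF depth that itl_frame_refl[OF frame]
            itl_frame_antisym[OF frame] itl_frame_trans[OF frame]])
    show "V m = V m'" if "maximal_world W le m" "maximal_world W le m'"
      "le ((S ^^ k) w) m" "le ((S ^^ k) w) m'" for k m m'
      by (intro set_eqI) (rule sat_wem_maximal_agree[OF wem that])
  qed (fact model persistent assms(2))+
  show ?thesis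
  proof (intro exI conjI allI)
    show "itl_bd_model n W' le' S' V'"
      unfolding itl_bd_model_def using model' persistent' bounded_depth_W'[OF depth] by blast
    show "cls (w, 0) \<in> W'" using cls_in_W'[OF orbit_cone[of 0]] by simp
    show "itl_bisim W le S V W' le' S' V' Z" by (rule bisim)
    fix i
    show "((S ^^ i) w, (S' ^^ i) (cls (w, 0))) \<in> Z"
      using S'_orbit orbit_cone unfolding Z_def by blast
    show "unique_max_above W' le' ((S' ^^ i) (cls (w, 0)))"
      using S'_orbit unique_max_above_cls orbit_cone by simp
  qed
qed

end
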